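(* Let $n\ge3$, $t_1<\dots<t_n$, and for $j=1,\dots,n-1$ let $\lambda_{0,j}\le0\le\lambda_{1,j}$ be real and $\varphi_j=\Phi_{(\lambda_{0,j},\lambda_{1,j})}$. Let $H_1,\dots,H_n$ be the generalized hat functions built from $\varphi_1,\dots,\varphi_{n-1}$ and $t_1<\dots<t_n$. Then $0\le\sum_{j=1}^nH_j(t)\le1$ for all $t\in[t_1,t_n]$.
   Context: $\Phi_{(\lambda_0,\lambda_1)}$ is the unique solution of $(\frac{d}{dt}-\lambda_0)(\frac{d}{dt}-\lambda_1)u=0$ with $u(0)=0$, $u'(0)=1$ (it is strictly increasing on $\mathbb{R}$ when $\lambda_0\le0\le\lambda_1$). Generalized hat functions: for $2\le j\le n-1$, $H_j(t)=\frac{\varphi_{j-1}(t-t_{j-1})}{\varphi_{j-1}(t_j-t_{j-1})}$ on $[t_{j-1},t_j]$, $H_j(t)=\frac{\varphi_j(t-t_{j+1})}{\varphi_j(t_j-t_{j+1})}$ on $[t_j,t_{j+1}]$, and $0$ elsewhere on $[t_1,t_n]$; $H_1(t)=\frac{\varphi_1(t-t_2)}{\varphi_1(t_1-t_2)}$ on $[t_1,t_2]$ and $0$ elsewhere; $H_n(t)=\frac{\varphi_{n-1}(t-t_{n-1})}{\varphi_{n-1}(t_n-t_{n-1})}$ on $[t_{n-1},t_n]$ and $0$ elsewhere. *)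

theory Defs
  imports "HOL-Analysis.Analysis"
begin

text \<open>Phi (l0,l1): the unique solution u of (d/dt - l0)(d/dt - l1) u = 0, i.e.
  u'' - (l0 + l1) u' + l0 l1 u = 0 on the reals, with u(0) = 0, u'(0) = 1.\<close>
definition Phi :: "real \<Rightarrow> real \<Rightarrow> real \<Rightarrow> real" where
  "Phi l0 l1 = (THE u. \<exists>u'. (\<forall>x. (u has_real_derivative u' x) (at x))
      \<and> (\<forall>x. (u' has_real_derivative ((l0 + l1) * u' x - l0 * l1 * u x)) (at x))
      \<and> u 0 = 0 \<and> u' 0 = 1)"

definition hat :: "nat \<Rightarrow> (nat \<Rightarrow> real \<Rightarrow> real) \<Rightarrow> (nat \<Rightarrow> real) \<Rightarrow> nat \<Rightarrow> real \<Rightarrow> real" where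
  "hat n phi t j x =
     (if 2 \<le> j \<and> j \<le> n \<and> t (j-1) \<le> x \<and> x \<le> t j then
        phi (j-1) (x - t (j-1)) / phi (j-1) (t j - t (j-1))
      else if 1 \<le> j \<and> j \<le> n - 1 \<and> t j \<le> x \<and> x \<le> t (j+1) then
        phi j (x - t (j+1)) / phi j (t j - t (j+1))
      else 0)"

end

theory Submission
  imports Defs
begin

text \<open>On a knot interval \<open>[t k, t (k + 1)]\<close> only \<open>H k\<close> and \<open>H (k + 1)\<close> are nonzero,
  and with \<open>h = t (k + 1) - t k\<close>, \<open>s = x - t k\<close> their sum is
  \<open>\<phi> (s - h) / \<phi> (-h) + \<phi> s / \<phi> h\<close>. Solving the ODE shows that \<open>\<phi> s\<close> is the divided
  difference \<open>(exp (b s) - exp (a s)) / (b - a)\<close>, which has the sign of \<open>s\<close>; hence the sum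
  is nonnegative. Writing \<open>X = exp (b s)\<close>, \<open>Y = exp (a s)\<close>, \<open>P = exp (b h)\<close>,
  \<open>Q = exp (a h)\<close>, the bound by \<open>1\<close> becomes \<open>(X - 1) (1 - Q) \<le> (1 - Y) (P - 1)\<close>. Convexity
  of \<open>exp\<close> gives \<open>X - 1 \<le> (s/h) (P - 1)\<close> and \<open>(s/h) (1 - Q) \<le> 1 - Y\<close>, and the factors
  \<open>1 - Q\<close>, \<open>P - 1\<close> are nonnegative because \<open>a \<le> 0 \<le> b\<close>.\<close>

lemma linear_ode2_zero_unique:
  fixes w w' :: "real \<Rightarrow> real"
  assumes w: "\<And>x. (w has_real_derivative w' x) (at x)"
    and w': "\<And>x. (w' has_real_derivative ((a + b) * w' x - a * b * w x)) (at x)"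
    and "w 0 = 0" "w' 0 = 0"
  shows "w y = 0"
proof -
  define p where "p x = w' x - a * w x" for x
  have "(p has_real_derivative b * p x) (at x)" for x
    unfolding p_def using w[of x] w'[of x]
    by (auto intro!: derivative_eq_intros simp: algebra_simps)
  then have "((\<lambda>x. p x * exp (- b * x)) has_real_derivative 0) (at x)" for x
    by (auto intro!: derivative_eq_intros simp: algebra_simps)
  then have "p x * exp (- b * x) = p 0 * exp (- b * 0)" for x
    by (intro DERIV_isconst_all) auto
  then have p_zero: "p x = 0" for x
    using assms(3,4) by (simp add: p_def)
  have "((\<lambda>x. w x * exp (- a * x)) has_real_derivative 0) (at x)" for x
    using w[of x] p_zero[of x] unfolding p_def
    by (auto intro!: derivative_eq_intros simp: algebra_simps)
  then have "w y * exp (- a * y) = w 0 * exp (- a * 0)"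
    by (intro DERIV_isconst_all) auto
  with assms(3) show ?thesis by simp
qed

definition exp_divided_diff :: "real \<Rightarrow> real \<Rightarrow> real \<Rightarrow> real" where
  "exp_divided_diff a b s =
     (if a = b then s * exp (a * s) else (exp (b * s) - exp (a * s)) / (b - a))"

definition exp_divided_diff_deriv :: "real \<Rightarrow> real \<Rightarrow> real \<Rightarrow> real" where
  "exp_divided_diff_deriv a b s =
     (if a = b then exp (a * s) + a * s * exp (a * s)
      else (b * exp (b * s) - a * exp (a * s)) / (b - a))"

lemma has_real_derivative_exp_divided_diff:
  "(exp_divided_diff a b has_real_derivative exp_divided_diff_deriv a b x) (at x)"
proof (cases "a = b")
  case False
  define c where "c = 1 / (b - a)"
  have "exp_divided_diff a b = (\<lambda>s. c * (exp (b * s) - exp (a * s)))"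
    "exp_divided_diff_deriv a b x = c * (b * exp (b * x) - a * exp (a * x))"
    using False by (auto simp: exp_divided_diff_def exp_divided_diff_deriv_def c_def fun_eq_iff)
  then show ?thesis
    by (auto intro!: derivative_eq_intros simp: algebra_simps)
qed (auto intro!: derivative_eq_intros
      simp: exp_divided_diff_def[abs_def] exp_divided_diff_deriv_def algebra_simps)

lemma has_real_derivative_exp_divided_diff_deriv:
  "(exp_divided_diff_deriv a b has_real_derivative
     ((a + b) * exp_divided_diff_deriv a b x - a * b * exp_divided_diff a b x)) (at x)"
proof (cases "a = b")
  case False
  define c where "c = 1 / (b - a)"
  have val_eq: "exp_divided_diff a b x = c * (exp (b * x) - exp (a * x))"
    and deriv_eq: "exp_divided_diff_deriv a b = (\<lambda>s. c * (b * exp (b * s) - a * exp (a * s)))"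
    using False by (auto simp: exp_divided_diff_def exp_divided_diff_deriv_def c_def fun_eq_iff)
  show ?thesis
    unfolding val_eq deriv_eq by (auto intro!: derivative_eq_intros simp: algebra_simps power2_eq_square)
qed (auto intro!: derivative_eq_intros simp: exp_divided_diff_def
      exp_divided_diff_deriv_def[abs_def] algebra_simps power2_eq_square)

lemma Phi_eq_exp_divided_diff: "Phi a b = exp_divided_diff a b"
  unfolding Phi_def
proof (rule the_equality)
  show "\<exists>u'. (\<forall>x. (exp_divided_diff a b has_real_derivative u' x) (at x)) \<and>
      (\<forall>x. (u' has_real_derivative (a + b) * u' x - a * b * exp_divided_diff a b x) (at x)) \<and>
      exp_divided_diff a b 0 = 0 \<and> u' 0 = 1"
    by (intro exI[of _ "exp_divided_diff_deriv a b"] conjI allI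
        has_real_derivative_exp_divided_diff has_real_derivative_exp_divided_diff_deriv)
      (simp_all add: exp_divided_diff_def exp_divided_diff_deriv_def)
next
  fix u assume "\<exists>u'. (\<forall>x. (u has_real_derivative u' x) (at x)) \<and>
      (\<forall>x. (u' has_real_derivative (a + b) * u' x - a * b * u x) (at x)) \<and>
      u 0 = 0 \<and> u' 0 = 1"
  then obtain u' where u: "\<And>x. (u has_real_derivative u' x) (at x)"
    and u': "\<And>x. (u' has_real_derivative (a + b) * u' x - a * b * u x) (at x)"
    and "u 0 = 0" "u' 0 = 1"
    by blast
  have "u y - exp_divided_diff a b y = 0" for y
  proof (rule linear_ode2_zero_unique[where a = a and b = b
        and w = "\<lambda>x. u x - exp_divided_diff a b x" and w' = "\<lambda>x. u' x - exp_divided_diff_deriv a b x"])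
    show "((\<lambda>x. u x - exp_divided_diff a b x) has_real_derivative
        u' x - exp_divided_diff_deriv a b x) (at x)" for x
      using u has_real_derivative_exp_divided_diff by (intro derivative_intros)
    show "((\<lambda>x. u' x - exp_divided_diff_deriv a b x) has_real_derivative
        (a + b) * (u' x - exp_divided_diff_deriv a b x)
        - a * b * (u x - exp_divided_diff a b x)) (at x)" for x
      using DERIV_diff[OF u'[of x] has_real_derivative_exp_divided_diff_deriv[of a b x]]
      by (simp add: algebra_simps)
  qed (use \<open>u 0 = 0\<close> \<open>u' 0 = 1\<close> in \<open>simp_all add: exp_divided_diff_def exp_divided_diff_deriv_def\<close>)
  then show "u = exp_divided_diff a b"
    by auto
qed

lemma sgn_Phi: "sgn (Phi a b s) = sgn s"
proof (cases "a = b")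
  case False
  consider "a < b" | "b < a" using False by linarith
  then show ?thesis
    by cases (auto simp: Phi_eq_exp_divided_diff exp_divided_diff_def sgn_if
        zero_less_divide_iff divide_less_0_iff mult_less_cancel_right)
qed (simp add: Phi_eq_exp_divided_diff exp_divided_diff_def sgn_mult)

lemma Phi_zero [simp]: "Phi a b 0 = 0"
  by (simp add: Phi_eq_exp_divided_diff exp_divided_diff_def)

lemma Phi_eq_0_iff [simp]: "Phi a b s = 0 \<longleftrightarrow> s = 0"
  by (metis sgn_Phi sgn_zero_iff)

lemma Phi_hat_pair_nonneg:
  assumes "0 \<le> s" "s \<le> h"
  shows "0 \<le> Phi a b (s - h) / Phi a b (- h) + Phi a b s / Phi a b h"
proof -
  have "0 \<le> Phi a b (s - h) / Phi a b (- h)" "0 \<le> Phi a b s / Phi a b h"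
    using assms sgn_Phi[of a b "s - h"] sgn_Phi[of a b "- h"] sgn_Phi[of a b s] sgn_Phi[of a b h]
    by (auto simp: zero_le_divide_iff sgn_if split: if_splits)
  then show ?thesis
    by simp
qed

lemma exp_le_chord:
  fixes \<theta> c :: real
  assumes "0 \<le> \<theta>" "\<theta> \<le> 1"
  shows "exp (\<theta> * c) \<le> 1 - \<theta> + \<theta> * exp c"
  using convex_onD[OF exp_convex, of \<theta> 0 c] assms by simp

lemma Phi_hat_pair_le_one:
  assumes "a \<le> 0" "0 \<le> b" "0 < h" "0 \<le> s" "s \<le> h"
  shows "Phi a b (s - h) / Phi a b (- h) + Phi a b s / Phi a b h \<le> 1"
proof (cases "a = b")
  case True
  with assms show ?thesis
    by (simp add: Phi_eq_exp_divided_diff exp_divided_diff_def field_simps)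
next
  case False
  define X Y P Q where "X = exp (b * s)" "Y = exp (a * s)" "P = exp (b * h)" "Q = exp (a * h)"
  define \<theta> where "\<theta> = s / h"
  have \<theta>: "0 \<le> \<theta>" "\<theta> \<le> 1" "s = \<theta> * h"
    using assms by (auto simp: \<theta>_def)
  have PQ: "0 < Q" "Q \<le> 1" "1 \<le> P" "Q < P"
    using assms False by (auto simp: X_Y_P_Q_def mult_nonpos_nonneg)
  have "X \<le> 1 - \<theta> + \<theta> * P" "Y \<le> 1 - \<theta> + \<theta> * Q"
    using exp_le_chord[OF \<theta>(1,2), of "b * h"] exp_le_chord[OF \<theta>(1,2), of "a * h"]
    by (simp_all add: X_Y_P_Q_def \<theta>(3) ac_simps)
  then have X_chord: "X - 1 \<le> \<theta> * (P - 1)" and Y_chord: "\<theta> * (1 - Q) \<le> 1 - Y"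
    by (simp_all add: right_diff_distrib)
  have "(X - 1) * (1 - Q) \<le> \<theta> * (1 - Q) * (P - 1)"
    using mult_right_mono[OF X_chord, of "1 - Q"] PQ by (simp add: ac_simps)
  also have "\<dots> \<le> (1 - Y) * (P - 1)"
    using mult_right_mono[OF Y_chord, of "P - 1"] PQ by simp
  finally have "Y * P - X * Q + (X - Y) \<le> P - Q"
    by (simp add: algebra_simps)
  moreover have "Phi a b (s - h) / Phi a b (- h) + Phi a b s / Phi a b h
      = (Y * P - X * Q + (X - Y)) / (P - Q)"
  proof -
    have Phi_vals: "Phi a b (s - h) = (X / P - Y / Q) / (b - a)" "Phi a b (- h) = (1 / P - 1 / Q) / (b - a)"
      "Phi a b s = (X - Y) / (b - a)" "Phi a b h = (P - Q) / (b - a)"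
      using False by (simp_all add: Phi_eq_exp_divided_diff exp_divided_diff_def X_Y_P_Q_def
          right_diff_distrib exp_diff exp_minus inverse_eq_divide)
    have "(X / P - Y / Q) / (1 / P - 1 / Q) = (Y * P - X * Q) / (P - Q)"
      using PQ by (simp add: field_simps)
    with False show ?thesis
      unfolding Phi_vals by (simp add: add_divide_distrib)
  qed
  ultimately show ?thesis
    using PQ by simp
qed

locale hat_knots =
  fixes n :: nat and phi :: "nat \<Rightarrow> real \<Rightarrow> real" and t :: "nat \<Rightarrow> real"
  assumes knots_step_less: "\<And>i. 1 \<le> i \<Longrightarrow> i < n \<Longrightarrow> t i < t (i + 1)"
    and phi_zero: "\<And>j. phi j 0 = 0"
    and phi_nonzero: "\<And>j y. 1 \<le> j \<Longrightarrow> j < n \<Longrightarrow> y \<noteq> 0 \<Longrightarrow> phi j y \<noteq> 0"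
begin

lemma knots_less:
  assumes "1 \<le> i" "i < j" "j \<le> n"
  shows "t i < t j"
  using assms(2,3)
proof (induction j)
  case (Suc j)
  then show ?case
    using knots_step_less[of j] assms(1) by (cases "i = j") (auto intro: less_trans)
qed simp

lemma knots_le: "1 \<le> i \<Longrightarrow> i \<le> j \<Longrightarrow> j \<le> n \<Longrightarrow> t i \<le> t j"
  using knots_less[of i j] by (cases "i = j") auto

lemma exists_knot_interval:
  assumes "2 \<le> n" "x \<in> {t 1 .. t n}"
  obtains k where "1 \<le> k" "k < n" "t k \<le> x" "x \<le> t (k + 1)"
proof -
  define K where "K = {k. 1 \<le> k \<and> k < n \<and> t k \<le> x}"
  define k where "k = Max K"
  have "1 \<in> K" "finite K"
    using assms by (auto simp: K_def)
  then have "k \<in> K" and k_max: "\<And>i. i \<in> K \<Longrightarrow> i \<le> k"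
    by (auto simp: k_def intro: Max_in Max_ge)
  then have k: "1 \<le> k" "k < n" "t k \<le> x"
    by (auto simp: K_def)
  moreover have "x \<le> t (k + 1)"
  proof (cases "k + 1 = n")
    case False
    then have "k + 1 \<notin> K" using k_max by fastforce
    with k False show ?thesis by (auto simp: K_def)
  qed (use assms in auto)
  ultimately show thesis using that by blast
qed

context
  fixes k :: nat and x :: real
  assumes k: "1 \<le> k" "k < n" and x: "t k \<le> x" "x \<le> t (k + 1)"
begin

lemma hat_vanishes_off_interval:
  assumes "1 \<le> j" "j \<le> n" "j \<noteq> k" "j \<noteq> k + 1"
  shows "hat n phi t j x = 0"
proof (cases "j < k")
  case True
  have "t j < t (j + 1)" "t (j + 1) \<le> t k"
    using knots_step_less[of j] knots_le[of "j + 1" k] True assms k by auto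
  moreover have "j + 1 = k" if "x \<le> t (j + 1)"
  proof (rule ccontr)
    assume "j + 1 \<noteq> k"
    then have "t (j + 1) < t k"
      using knots_less[of "j + 1" k] True assms k by simp
    with that x show False
      by linarith
  qed
  ultimately show ?thesis
    using x by (cases "x = t (j + 1)") (auto simp: hat_def phi_zero)
next
  case False
  then have "k + 2 \<le> j" using assms by auto
  then have "t (k + 1) \<le> t (j - 1)" "t (k + 1) < t j"
    using knots_le[of "k + 1" "j - 1"] knots_less[of "k + 1" j] assms by auto
  with x show ?thesis
    by (cases "x = t (j - 1)") (auto simp: hat_def phi_zero)
qed

text \<open>At \<open>x = t k\<close> both pieces in \<open>hat_def\<close> apply and the rising one is chosen;
  it equals \<open>1\<close> there, like the falling one.\<close>

lemma hat_left_on_interval: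
  "hat n phi t k x = phi k (x - t (k + 1)) / phi k (t k - t (k + 1))"
proof (cases "2 \<le> k \<and> t (k - 1) \<le> x \<and> x \<le> t k")
  case True
  then have "x = t k" "t (k - 1) < t k"
    using x knots_less[of "k - 1" k] k by auto
  moreover have "phi (k - 1) (t k - t (k - 1)) \<noteq> 0" "phi k (t k - t (k + 1)) \<noteq> 0"
    using phi_nonzero[of "k - 1"] phi_nonzero[of k] True k knots_step_less[of k] \<open>t (k - 1) < t k\<close>
    by auto
  ultimately show ?thesis
    using True k by (simp add: hat_def)
qed (use k x in \<open>auto simp: hat_def\<close>)

lemma hat_right_on_interval:
  "hat n phi t (k + 1) x = phi k (x - t k) / phi k (t (k + 1) - t k)"
  using k x by (simp add: hat_def)

lemma sum_hat_on_interval: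
  "(\<Sum>j=1..n. hat n phi t j x) =
     phi k (x - t (k + 1)) / phi k (t k - t (k + 1)) + phi k (x - t k) / phi k (t (k + 1) - t k)"
proof -
  have "(\<Sum>j=1..n. hat n phi t j x) = (\<Sum>j\<in>{k, k + 1}. hat n phi t j x)"
    using hat_vanishes_off_interval k by (intro sum.mono_neutral_right) auto
  also have "\<dots> = hat n phi t k x + hat n phi t (k + 1) x"
    by simp
  finally show ?thesis
    unfolding hat_left_on_interval hat_right_on_interval .
qed

end

end

theorem mainTheorem11:
  fixes n :: nat and t :: "nat \<Rightarrow> real" and lam0 lam1 :: "nat \<Rightarrow> real" and x :: real
  assumes "n \<ge> 3"
    and "\<And>i. 1 \<le> i \<Longrightarrow> i < n \<Longrightarrow> t i < t (i+1)"
    and "\<And>j. 1 \<le> j \<Longrightarrow> j \<le> n - 1 \<Longrightarrow> lam0 j \<le> 0 \<and> 0 \<le> lam1 j"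
    and "x \<in> {t 1 .. t n}"
  shows "0 \<le> (\<Sum>j=1..n. hat n (\<lambda>j. Phi (lam0 j) (lam1 j)) t j x)
       \<and> (\<Sum>j=1..n. hat n (\<lambda>j. Phi (lam0 j) (lam1 j)) t j x) \<le> 1"
proof -
  interpret hat_knots n "\<lambda>j. Phi (lam0 j) (lam1 j)" t
    using assms(2) by unfold_locales auto
  from assms(1) have "2 \<le> n"
    by simp
  then obtain k where k: "1 \<le> k" "k < n" and x: "t k \<le> x" "x \<le> t (k + 1)"
    by (rule exists_knot_interval[OF _ assms(4)])
  have "t k < t (k + 1)"
    using assms(2) k by simp
  then show ?thesis
    using sum_hat_on_interval[OF k x] assms(3)[of k] k x
      Phi_hat_pair_nonneg[of "x - t k" "t (k + 1) - t k" "lam0 k" "lam1 k"]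
      Phi_hat_pair_le_one[of "lam0 k" "lam1 k" "t (k + 1) - t k" "x - t k"]
    by (simp add: algebra_simps)
qed

end
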